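(* Fix $2<p<\infty$ and constants $c,c',c''>0$. There is $C$ depending only on $p,c,c''$ such that: if a square $Q$ satisfies $\mathbf{R}(c,c',c'')$ relative to a finite set $E_0\subset\mathbb{R}^2$, then $\|Q\cap E_0\|_{\dot B}\ge C^{-1}\delta_Q^{2/p-1}$.
   Context: A square $Q$ is a closed axis-parallel square with side length $\delta_Q$. The Besov seminorm of a set $\Omega$ is $\|\Omega\|_{\dot B}=\inf\{\|\varphi\|_{\dot B(\mathbb{R})}\}$ over Euclidean coordinates $(z_1,z_2)$ and $\varphi$ with $\Omega\subset\{(z_1,\varphi(z_1))_{z_1z_2}\}$, where $\|\varphi\|_{\dot B(\mathbb{R})}=\big(\iint\frac{|\varphi'(x)-\varphi'(y)|^p}{|x-y|^p}dxdy\big)^{1/p}$. Roughness: $Q$ satisfies $\mathbf{R}(c,c',c'')$ relative to $E_0$ iff (R1) there exist $x_1,x_2,y_1,y_2\in E_0\cap Q$ with $x_1\ne x_2$, $y_1\ne y_2$ and $\min\{|v_1-v_2|,|v_1+v_2|\}>c''$ where $v_1=\frac{x_1-x_2}{|x_1-x_2|}$, $v_2=\frac{y_1-y_2}{|y_1-y_2|}$; or (R2) $c\,\delta_Q^{2/p-1}\le\|E_0\cap Q\|_{\dot B}\le c'\delta_Q^{2/p-1}$. *)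

theory Defs
  imports "HOL-Analysis.Analysis"
begin

text \<open>Points of the plane are pairs of reals; the product metric on real \<times> real is Euclidean.\<close>

definition besov_fun :: "real \<Rightarrow> (real \<Rightarrow> real) \<Rightarrow> ennreal" where
  "besov_fun p \<phi> =
     (let I = (\<integral>\<^sup>+ x. \<integral>\<^sup>+ y. ennreal (\<bar>deriv \<phi> x - deriv \<phi> y\<bar> powr p / \<bar>x - y\<bar> powr p) \<partial>lborel \<partial>lborel)
      in if I = \<infinity> then \<infinity> else ennreal ((enn2real I) powr (1 / p)))"

text \<open>Euclidean coordinates: a rigid motion T (distance-preserving map of the plane);
  the point z has coordinates T z = (z1, z2).\<close>
definition euclid_coords :: "(real \<times> real \<Rightarrow> real \<times> real) \<Rightarrow> bool" where
  "euclid_coords T \<longleftrightarrow> (\<forall>x y. dist (T x) (T y) = dist x y)"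

definition besov_set :: "real \<Rightarrow> (real \<times> real) set \<Rightarrow> ennreal" where
  "besov_set p \<Omega> = (INF \<phi> \<in> {\<phi>. (\<forall>x. \<phi> differentiable at x) \<and>
        (\<exists>T. euclid_coords T \<and> (\<forall>z\<in>\<Omega>. snd (T z) = \<phi> (fst (T z))))}. besov_fun p \<phi>)"

definition square :: "real \<times> real \<Rightarrow> real \<Rightarrow> (real \<times> real) set" where
  "square a \<delta> = {fst a .. fst a + \<delta>} \<times> {snd a .. snd a + \<delta>}"

definition unitv :: "real \<times> real \<Rightarrow> real \<times> real" where
  "unitv v = (1 / norm v) *\<^sub>R v"

definition rough :: "real \<Rightarrow> real \<Rightarrow> real \<Rightarrow> real \<Rightarrow> (real \<times> real) set \<Rightarrow> real \<times> real \<Rightarrow> real \<Rightarrow> bool" where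
  "rough p c c' c'' E0 a \<delta> \<longleftrightarrow>
     (\<exists>x1 x2 y1 y2. x1 \<in> E0 \<inter> square a \<delta> \<and> x2 \<in> E0 \<inter> square a \<delta> \<and>
        y1 \<in> E0 \<inter> square a \<delta> \<and> y2 \<in> E0 \<inter> square a \<delta> \<and> x1 \<noteq> x2 \<and> y1 \<noteq> y2 \<and>
        min (norm (unitv (x1 - x2) - unitv (y1 - y2))) (norm (unitv (x1 - x2) + unitv (y1 - y2))) > c'')
   \<or> (ennreal (c * \<delta> powr (2 / p - 1)) \<le> besov_set p (E0 \<inter> square a \<delta>) \<and>
      besov_set p (E0 \<inter> square a \<delta>) \<le> ennreal (c' * \<delta> powr (2 / p - 1)))"

end

theory Submission
  imports Defs
begin

(* For a graph function phi write s for its energy, the double integral of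
   |phi'(x) - phi'(y)|^p / |x - y|^p, so that besov_fun p phi = s^(1/p).  The analytic core
   is a Campanato-type estimate for chord slopes: for nested intervals A within B the slopes
   of phi over A and over B differ by at most K_p s^(1/p) |B|^(1 - 2/p).  It is proved first
   for intervals of comparable length, by averaging the derivative and optimising a free
   scale, and then in general by a dyadic chain whose geometric series converges as p > 2.
   The geometric core turns condition (R1) into two chords of the graph, lying over an
   interval of length at most sqrt 2 * delta (the diameter of the square), whose slopes
   differ by more than c'' / sqrt 2; the slope estimate then forces
   s^(1/p) >= C^(-1) delta^(2/p - 1).  Condition (R2) contains the lower bound directly, and
   the main theorem combines the two cases. *)

definition besov_energy :: "real \<Rightarrow> (real \<Rightarrow> real) \<Rightarrow> ennreal" where
  "besov_energy p \<phi> =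
     (\<integral>\<^sup>+x. \<integral>\<^sup>+y. ennreal (\<bar>deriv \<phi> x - deriv \<phi> y\<bar> powr p / \<bar>x - y\<bar> powr p) \<partial>lborel \<partial>lborel)"

lemma besov_fun_infinite: "besov_energy p \<phi> = \<infinity> \<Longrightarrow> besov_fun p \<phi> = \<infinity>"
  by (simp add: besov_fun_def besov_energy_def[symmetric])

lemma besov_fun_finite:
  assumes "besov_energy p \<phi> = ennreal s" and "s \<ge> 0"
  shows "besov_fun p \<phi> = ennreal (s powr (1 / p))"
  using assms by (simp add: besov_fun_def besov_energy_def[symmetric])

definition chord_slope :: "(real \<Rightarrow> real) \<Rightarrow> real \<Rightarrow> real \<Rightarrow> real" where
  "chord_slope \<phi> u v = (\<phi> v - \<phi> u) / (v - u)"

lemma chord_slope_sym: "chord_slope \<phi> u v = chord_slope \<phi> v u"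
  unfolding chord_slope_def by (metis minus_diff_eq minus_divide_divide)

(* The derivative of an everywhere differentiable function is a pointwise limit of
   continuous difference quotients, hence Borel measurable. *)
lemma deriv_borel_measurable:
  fixes \<phi> :: "real \<Rightarrow> real"
  assumes d: "\<forall>x. \<phi> differentiable at x"
  shows "deriv \<phi> \<in> borel_measurable borel"
proof (rule borel_measurable_LIMSEQ_real)
  have cont: "continuous_on UNIV \<phi>"
    using d by (meson continuous_at_imp_continuous_on differentiable_imp_continuous_within)
  fix i
  show "(\<lambda>x. (\<phi> (x + inverse (real (Suc i))) - \<phi> x) / inverse (real (Suc i))) \<in> borel_measurable borel"
    by (intro borel_measurable_continuous_onI continuous_intros continuous_on_compose2[OF cont]) auto
next
  fix x :: real
  have "DERIV \<phi> x :> deriv \<phi> x"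
    using d DERIV_deriv_iff_real_differentiable by blast
  then have L: "((\<lambda>h. (\<phi> (x + h) - \<phi> x) / h) \<longlongrightarrow> deriv \<phi> x) (at 0)"
    by (simp add: DERIV_def)
  have F: "filterlim (\<lambda>i. inverse (real (Suc i))) (at 0) sequentially"
    using LIMSEQ_inverse_real_of_nat by (intro filterlim_atI) auto
  show "(\<lambda>i. (\<phi> (x + inverse (real (Suc i))) - \<phi> x) / inverse (real (Suc i))) \<longlonglongrightarrow> deriv \<phi> x"
    using filterlim_compose[OF L F] by (simp add: o_def)
qed

lemma increment_le_nn_integral:
  fixes \<psi> g :: "real \<Rightarrow> real"
  assumes der: "\<And>x. (\<psi> has_real_derivative g x) (at x)"
    and gm: "g \<in> borel_measurable borel" and ab: "a \<le> b"
  shows "ennreal \<bar>\<psi> b - \<psi> a\<bar> \<le> (\<integral>\<^sup>+x. ennreal \<bar>g x\<bar> * indicator {a..b} x \<partial>lborel)"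
proof (cases "(\<integral>\<^sup>+x. ennreal \<bar>g x\<bar> * indicator {a..b} x \<partial>lborel) = \<infinity>")
  case True then show ?thesis by simp
next
  case False
  let ?h = "\<lambda>x. indicator {a..b} x * g x"
  have hm: "?h \<in> borel_measurable lborel" using gm by measurable
  have eq: "(\<integral>\<^sup>+x. ennreal (norm (?h x)) \<partial>lborel) = (\<integral>\<^sup>+x. ennreal \<bar>g x\<bar> * indicator {a..b} x \<partial>lborel)"
    by (intro nn_integral_cong) (auto simp: indicator_def)
  have int: "integrable lborel ?h"
    by (rule integrableI_bounded[OF hm]) (use False eq in \<open>simp add: less_top\<close>)
  have "(g has_integral (\<psi> b - \<psi> a)) {a..b}"
    by (intro fundamental_theorem_of_calculus ab)
       (auto intro: has_field_derivative_imp_has_derivative has_derivative_at_withinI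
          simp: has_real_derivative_iff_has_vector_derivative[symmetric] der has_field_derivative_at_within)
  moreover have si: "set_integrable lborel {a..b} g"
    using int by (simp add: set_integrable_def)
  ultimately have "(LINT x : {a..b} | lborel. g x) = \<psi> b - \<psi> a"
    using set_borel_integral_eq_integral(2)[OF si] by (simp add: integral_unique)
  then have "integral\<^sup>L lborel ?h = \<psi> b - \<psi> a"
    by (simp add: set_lebesgue_integral_def)
  moreover have "\<bar>integral\<^sup>L lborel ?h\<bar> \<le> integral\<^sup>L lborel (\<lambda>x. \<bar>?h x\<bar>)"
    by (rule integral_abs_bound)
  moreover have "ennreal (integral\<^sup>L lborel (\<lambda>x. \<bar>?h x\<bar>)) = (\<integral>\<^sup>+x. ennreal (norm (?h x)) \<partial>lborel)"
    by (subst nn_integral_eq_integral) (auto intro: integrable_abs int)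
  ultimately show ?thesis using eq by (metis ennreal_leI)
qed

(* Apply the previous estimate to phi(x) - phi'(y) x on [a1, a2] and then to
   sA x - phi(x) on [b1, b2], where sA is the slope over [a1, a2]. *)
lemma slope_difference_le_double_integral:
  fixes \<phi> f :: "real \<Rightarrow> real"
  assumes der: "\<And>x. (\<phi> has_real_derivative f x) (at x)" and fm: "f \<in> borel_measurable borel"
    and a: "a1 < a2" and b: "b1 < b2"
  shows "ennreal (\<bar>chord_slope \<phi> a1 a2 - chord_slope \<phi> b1 b2\<bar> * (a2 - a1) * (b2 - b1))
     \<le> (\<integral>\<^sup>+y. (\<integral>\<^sup>+x. ennreal \<bar>f x - f y\<bar> * indicator {a1..a2} x \<partial>lborel) * indicator {b1..b2} y \<partial>lborel)"
proof -
  note [measurable] = fm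
  define sA where "sA = chord_slope \<phi> a1 a2"
  have inner: "ennreal (\<bar>sA - f y\<bar> * (a2 - a1))
      \<le> (\<integral>\<^sup>+x. ennreal \<bar>f x - f y\<bar> * indicator {a1..a2} x \<partial>lborel)" for y
  proof -
    have "\<bar>(\<phi> a2 - f y * a2) - (\<phi> a1 - f y * a1)\<bar> = \<bar>sA - f y\<bar> * (a2 - a1)"
      using a unfolding sA_def chord_slope_def by (simp add: abs_mult[symmetric] field_simps)
    moreover have "ennreal \<bar>(\<phi> a2 - f y * a2) - (\<phi> a1 - f y * a1)\<bar>
          \<le> (\<integral>\<^sup>+x. ennreal \<bar>f x - f y\<bar> * indicator {a1..a2} x \<partial>lborel)"
      by (rule increment_le_nn_integral) (use a fm in \<open>auto intro!: derivative_eq_intros der\<close>)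
    ultimately show ?thesis by simp
  qed
  have outer: "ennreal (\<bar>sA - chord_slope \<phi> b1 b2\<bar> * (b2 - b1))
      \<le> (\<integral>\<^sup>+y. ennreal \<bar>sA - f y\<bar> * indicator {b1..b2} y \<partial>lborel)"
  proof -
    have "\<bar>(sA * b2 - \<phi> b2) - (sA * b1 - \<phi> b1)\<bar> = \<bar>sA - chord_slope \<phi> b1 b2\<bar> * (b2 - b1)"
      using b unfolding chord_slope_def by (simp add: abs_mult[symmetric] field_simps)
    moreover have "ennreal \<bar>(sA * b2 - \<phi> b2) - (sA * b1 - \<phi> b1)\<bar>
          \<le> (\<integral>\<^sup>+y. ennreal \<bar>sA - f y\<bar> * indicator {b1..b2} y \<partial>lborel)"
      by (rule increment_le_nn_integral) (use b fm in \<open>auto intro!: derivative_eq_intros der\<close>)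
    ultimately show ?thesis by simp
  qed
  have "ennreal (\<bar>sA - chord_slope \<phi> b1 b2\<bar> * (a2 - a1) * (b2 - b1))
      = ennreal (\<bar>sA - chord_slope \<phi> b1 b2\<bar> * (b2 - b1)) * ennreal (a2 - a1)"
    using a b by (simp add: ennreal_mult[symmetric] mult_ac)
  also have "\<dots> \<le> (\<integral>\<^sup>+y. ennreal \<bar>sA - f y\<bar> * indicator {b1..b2} y \<partial>lborel) * ennreal (a2 - a1)"
    using outer by (rule mult_right_mono) simp
  also have "\<dots> = (\<integral>\<^sup>+y. ennreal (\<bar>sA - f y\<bar> * (a2 - a1)) * indicator {b1..b2} y \<partial>lborel)"
    using a by (subst nn_integral_multc[symmetric])
      (auto intro!: nn_integral_cong simp: ennreal_mult mult_ac)
  also have "\<dots> \<le> (\<integral>\<^sup>+y. (\<integral>\<^sup>+x. ennreal \<bar>f x - f y\<bar> * indicator {a1..a2} x \<partial>lborel) * indicator {b1..b2} y \<partial>lborel)"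
    by (intro nn_integral_mono mult_right_mono inner) simp
  finally show ?thesis unfolding sA_def .
qed

lemma nn_integral_box_bound:
  fixes g h :: "real \<Rightarrow> real \<Rightarrow> ennreal" and A B :: "real set" and c1 c2 :: ennreal
  assumes [measurable]: "(\<lambda>(y, x). h x y) \<in> borel_measurable (lborel \<Otimes>\<^sub>M lborel)"
    and A[measurable]: "A \<in> sets lborel" and B[measurable]: "B \<in> sets lborel"
    and bound: "\<And>x y. x \<in> A \<Longrightarrow> y \<in> B \<Longrightarrow> g x y \<le> c1 * h x y + c2"
  shows "(\<integral>\<^sup>+y. (\<integral>\<^sup>+x. g x y * indicator A x \<partial>lborel) * indicator B y \<partial>lborel)
     \<le> c1 * (\<integral>\<^sup>+y. \<integral>\<^sup>+x. h x y \<partial>lborel \<partial>lborel) + c2 * emeasure lborel A * emeasure lborel B"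
proof -
  have [measurable]: "(\<lambda>y. \<integral>\<^sup>+x. h x y \<partial>lborel) \<in> borel_measurable lborel"
    by (rule lborel.borel_measurable_nn_integral) simp
  have inner: "(\<integral>\<^sup>+x. g x y * indicator A x \<partial>lborel)
      \<le> c1 * (\<integral>\<^sup>+x. h x y \<partial>lborel) + c2 * emeasure lborel A" if "y \<in> B" for y
  proof -
    have "(\<integral>\<^sup>+x. g x y * indicator A x \<partial>lborel)
        \<le> (\<integral>\<^sup>+x. c1 * (h x y * indicator A x) + c2 * indicator A x \<partial>lborel)"
      using bound that by (intro nn_integral_mono) (auto simp: indicator_def)
    also have "\<dots> = c1 * (\<integral>\<^sup>+x. h x y * indicator A x \<partial>lborel) + c2 * emeasure lborel A"
      using A by (simp add: nn_integral_add nn_integral_cmult)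
    also have "\<dots> \<le> c1 * (\<integral>\<^sup>+x. h x y \<partial>lborel) + c2 * emeasure lborel A"
      by (intro add_mono mult_left_mono nn_integral_mono) (auto simp: indicator_def)
    finally show ?thesis .
  qed
  have "(\<integral>\<^sup>+y. (\<integral>\<^sup>+x. g x y * indicator A x \<partial>lborel) * indicator B y \<partial>lborel)
      \<le> (\<integral>\<^sup>+y. c1 * ((\<integral>\<^sup>+x. h x y \<partial>lborel) * indicator B y)
              + (c2 * emeasure lborel A) * indicator B y \<partial>lborel)"
    using inner by (intro nn_integral_mono) (auto simp: indicator_def)
  also have "\<dots> = c1 * (\<integral>\<^sup>+y. (\<integral>\<^sup>+x. h x y \<partial>lborel) * indicator B y \<partial>lborel)
      + c2 * emeasure lborel A * emeasure lborel B"
    using B by (simp add: nn_integral_add nn_integral_cmult)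
  also have "\<dots> \<le> c1 * (\<integral>\<^sup>+y. \<integral>\<^sup>+x. h x y \<partial>lborel \<partial>lborel) + c2 * emeasure lborel A * emeasure lborel B"
    by (intro add_mono mult_left_mono nn_integral_mono) (auto simp: indicator_def)
  finally show ?thesis .
qed

lemma abs_le_power_ratio_bound:
  fixes u v l lam p :: real
  assumes "\<bar>v\<bar> \<le> l" "lam > 0" "p > 1" "v = 0 \<Longrightarrow> u = 0"
  shows "\<bar>u\<bar> \<le> l * (lam powr (1 - p) * (\<bar>u\<bar> powr p / \<bar>v\<bar> powr p) + lam)"
proof (cases "v = 0")
  case True
  then show ?thesis using assms by simp
next
  case False
  define G where "G = \<bar>u\<bar> / \<bar>v\<bar>"
  have G0: "G \<ge> 0" by (simp add: G_def)
  have G: "G \<le> lam powr (1 - p) * G powr p + lam"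
  proof (cases "G \<le> lam")
    case True then show ?thesis
      by (smt (verit) G0 mult_nonneg_nonneg powr_ge_zero)
  next
    case False
    then have "lam powr (1 - p) * G powr p \<ge> G powr (1 - p) * G powr p"
      by (intro mult_right_mono powr_mono2') (use assms in auto)
    also have "G powr (1 - p) * G powr p = G"
      using False assms by (simp add: powr_add[symmetric])
    finally show ?thesis using assms by simp
  qed
  have "\<bar>u\<bar> = \<bar>v\<bar> * G" using False by (simp add: G_def)
  also have "\<dots> \<le> l * (lam powr (1 - p) * G powr p + lam)"
    by (intro mult_mono) (use assms G G0 in auto)
  finally show ?thesis by (simp add: G_def powr_divide)
qed

(* Slope estimate for nested intervals [a1, a2] within [b1, b2] with a free scale lam:
   combine averaging with the pointwise interpolation (note |x - y| <= b2 - b1) and bound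
   the restricted double integral of the Besov integrand by the whole energy s. *)
lemma slope_difference_le_energy:
  fixes \<phi> :: "real \<Rightarrow> real" and p s lam a1 a2 b1 b2 :: real
  assumes d: "\<forall>x. \<phi> differentiable at x" and p: "p > 1"
    and S: "besov_energy p \<phi> = ennreal s" and s0: "s \<ge> 0"
    and a: "a1 < a2" and sub: "b1 \<le> a1" "a2 \<le> b2" and lam: "lam > 0"
  shows "\<bar>chord_slope \<phi> a1 a2 - chord_slope \<phi> b1 b2\<bar> \<le> lam powr (1 - p) * s / (a2 - a1) + lam * (b2 - b1)"
proof -
  define f where "f = deriv \<phi>"
  have fm[measurable]: "f \<in> borel_measurable borel"
    unfolding f_def using deriv_borel_measurable d by blast
  have der: "\<And>x. (\<phi> has_real_derivative f x) (at x)"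
    unfolding f_def using d DERIV_deriv_iff_real_differentiable by blast
  define F where "F = (\<lambda>x y. ennreal (\<bar>f x - f y\<bar> powr p / \<bar>x - y\<bar> powr p))"
  have Fm: "(\<lambda>(y, x). F x y) \<in> borel_measurable (lborel \<Otimes>\<^sub>M lborel)"
    unfolding F_def by measurable
  have F_energy: "(\<integral>\<^sup>+y. \<integral>\<^sup>+x. F x y \<partial>lborel \<partial>lborel) = ennreal s"
    using S unfolding besov_energy_def F_def f_def by (simp add: abs_minus_commute)
  define lA where "lA = a2 - a1"
  define lB where "lB = b2 - b1"
  have lA: "lA > 0" and lB: "lB > 0" using a sub by (auto simp: lA_def lB_def)
  define c1 where "c1 = lB * lam powr (1 - p)"
  define c2 where "c2 = lB * lam"
  have c: "c1 \<ge> 0" "c2 \<ge> 0" using lB lam by (auto simp: c1_def c2_def)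
  have pointwise: "ennreal \<bar>f x - f y\<bar> \<le> ennreal c1 * F x y + ennreal c2"
    if "x \<in> {a1..a2}" "y \<in> {b1..b2}" for x y
  proof -
    have "\<bar>f x - f y\<bar> \<le> lB * (lam powr (1 - p) * (\<bar>f x - f y\<bar> powr p / \<bar>x - y\<bar> powr p) + lam)"
      by (rule abs_le_power_ratio_bound) (use that sub lam p lB_def in auto)
    then have "ennreal \<bar>f x - f y\<bar> \<le> ennreal (c1 * (\<bar>f x - f y\<bar> powr p / \<bar>x - y\<bar> powr p) + c2)"
      by (intro ennreal_leI) (simp add: c1_def c2_def algebra_simps)
    then show ?thesis
      using c by (simp add: F_def ennreal_mult[symmetric])
  qed
  have "ennreal (\<bar>chord_slope \<phi> a1 a2 - chord_slope \<phi> b1 b2\<bar> * lA * lB)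
      \<le> (\<integral>\<^sup>+y. (\<integral>\<^sup>+x. ennreal \<bar>f x - f y\<bar> * indicator {a1..a2} x \<partial>lborel) * indicator {b1..b2} y \<partial>lborel)"
    unfolding lA_def lB_def by (rule slope_difference_le_double_integral[OF der fm a]) (use a sub in auto)
  also have "\<dots> \<le> ennreal c1 * (\<integral>\<^sup>+y. \<integral>\<^sup>+x. F x y \<partial>lborel \<partial>lborel)
      + ennreal c2 * emeasure lborel {a1..a2} * emeasure lborel {b1..b2}"
    by (rule nn_integral_box_bound[OF Fm]) (use pointwise in auto)
  also have "\<dots> = ennreal c1 * ennreal s + ennreal c2 * ennreal lA * ennreal lB"
    using F_energy a sub by (simp add: lA_def lB_def)
  also have "\<dots> = ennreal (c1 * s + c2 * lA * lB)"
    using c s0 lA lB by (simp add: ennreal_mult)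
  finally have "\<bar>chord_slope \<phi> a1 a2 - chord_slope \<phi> b1 b2\<bar> * (lA * lB) \<le> c1 * s + c2 * lA * lB"
    using c s0 lA lB by (subst (asm) ennreal_le_iff) (auto simp: mult.assoc)
  also have "\<dots> = (lam powr (1 - p) * s / lA + lam * lB) * (lA * lB)"
    using lA by (simp add: c1_def c2_def field_simps)
  finally show ?thesis
    using lA lB by (simp add: mult_le_cancel_right lA_def lB_def)
qed

(* Optimising the free scale: lam = (s / (A B))^(1/p) balances the two terms. *)
lemma le_optimal_scale:
  fixes d s A B p :: real
  assumes p: "p > 1" and s: "s \<ge> 0" and A: "A > 0" and B: "B > 0"
    and bound: "\<And>lam. lam > 0 \<Longrightarrow> d \<le> lam powr (1 - p) * s / A + lam * B"
  shows "d \<le> 2 * (s / (A * B)) powr (1 / p) * B"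
proof (cases "s = 0")
  case True
  have "d \<le> 0"
  proof (rule ccontr)
    assume "\<not> d \<le> 0"
    then have "d \<le> d / (2 * B) * B" using bound[of "d / (2 * B)"] True B by simp
    then show False using \<open>\<not> d \<le> 0\<close> B by (simp add: field_simps)
  qed
  then show ?thesis using True by simp
next
  case False
  define lam where "lam = (s / (A * B)) powr (1 / p)"
  have lam: "lam > 0" using False s A B by (simp add: lam_def)
  have "lam powr p = s / (A * B)" using False s A B p by (simp add: lam_def powr_powr)
  then have "lam powr (1 - p) * s / A = lam * B"
    using lam False A B by (simp add: powr_diff field_simps)
  then show ?thesis using bound[OF lam] by (simp add: lam_def algebra_simps)
qed

lemma slope_difference_comparable:
  fixes \<phi> :: "real \<Rightarrow> real" and p s a1 a2 b1 b2 :: real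
  assumes d: "\<forall>x. \<phi> differentiable at x" and p: "p > 2"
    and S: "besov_energy p \<phi> = ennreal s" and s0: "s \<ge> 0"
    and a: "a1 < a2" and sub: "b1 \<le> a1" "a2 \<le> b2" and dbl: "b2 - b1 \<le> 2 * (a2 - a1)"
  shows "\<bar>chord_slope \<phi> a1 a2 - chord_slope \<phi> b1 b2\<bar> \<le> 4 * s powr (1 / p) * (b2 - b1) powr (1 - 2 / p)"
proof -
  define lA where "lA = a2 - a1"
  define lB where "lB = b2 - b1"
  have lA: "lA > 0" and lB: "lB > 0" using a sub by (auto simp: lA_def lB_def)
  define X where "X = s powr (1 / p) / lB powr (2 / p)"
  have slope_bound: "\<bar>chord_slope \<phi> a1 a2 - chord_slope \<phi> b1 b2\<bar> \<le> 2 * (s / (lA * lB)) powr (1 / p) * lB"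
    using p s0 lA lB
    by (intro le_optimal_scale slope_difference_le_energy[OF d _ S s0 a sub, folded lA_def lB_def]) auto
  moreover have "(s / (lA * lB)) powr (1 / p) \<le> 2 powr (1 / p) * X"
  proof -
    have "s / (lA * lB) = 2 * s / (2 * (lA * lB))" by simp
    also have "\<dots> \<le> 2 * s / lB\<^sup>2"
      using s0 lA lB dbl by (intro divide_left_mono) (auto simp: lA_def lB_def power2_eq_square)
    finally have "(s / (lA * lB)) powr (1 / p) \<le> (2 * s / lB\<^sup>2) powr (1 / p)"
      using s0 lA lB p by (intro powr_mono2) auto
    also have "\<dots> = 2 powr (1 / p) * X"
    proof -
      have "lB\<^sup>2 powr (1 / p) = lB powr (2 / p)"
        using lB powr_powr[of lB 2 "1 / p"] powr_numeral[of lB "num.Bit0 num.One"] by simp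
      then show ?thesis using s0 lB by (simp add: X_def powr_divide powr_mult)
    qed
    finally show ?thesis .
  qed
  moreover have "2 powr (1 / p) \<le> 2"
    using p powr_mono[of "1 / p" 1 2] by simp
  moreover have "X \<ge> 0" by (simp add: X_def)
  ultimately have "(s / (lA * lB)) powr (1 / p) \<le> 2 * X"
    by (meson mult_right_mono order_trans)
  then have "2 * (s / (lA * lB)) powr (1 / p) * lB \<le> 2 * (2 * X) * lB"
    using lB by simp
  with slope_bound have "\<bar>chord_slope \<phi> a1 a2 - chord_slope \<phi> b1 b2\<bar> \<le> 2 * (2 * X) * lB"
    by linarith
  also have "\<dots> = 4 * s powr (1 / p) * lB powr (1 - 2 / p)"
    using lB by (simp add: X_def powr_diff)
  finally show ?thesis by (simp add: lB_def)
qed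

(* The constant of the multiscale slope estimate: the sum 4 (1 + r + r^2 + ...) of the
   geometric series with ratio r = 2^(2/p - 1), which is < 1 exactly because p > 2. *)
definition slope_const :: "real \<Rightarrow> real" where
  "slope_const p = 4 * 2 powr (1 - 2 / p) / (2 powr (1 - 2 / p) - 1)"

(* Halving an interval multiplies |B|^(1 - 2/p) by 1 / 2^(1 - 2/p) < 1. *)
lemma two_powr_gt_1: "p > 2 \<Longrightarrow> 1 < 2 powr (1 - 2 / (p :: real))"
  using powr_less_mono[of 0 "1 - 2 / p" 2] by (simp add: field_simps)

lemma slope_const_ge_4: "p > 2 \<Longrightarrow> slope_const p \<ge> 4"
  using two_powr_gt_1[of p] unfolding slope_const_def by (simp add: field_simps)

(* The constant absorbs one halving step: K / 2^(1 - 2/p) + 4 = K. *)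
lemma slope_const_fixed_point: "p > 2 \<Longrightarrow> slope_const p / 2 powr (1 - 2 / p) + 4 = slope_const p"
  using two_powr_gt_1[of p] unfolding slope_const_def by (simp add: field_simps)

(* Multiscale estimate, by induction on the number n of halvings between the two lengths:
   pass from [b1, b2] to a subinterval of half its length still containing [a1, a2]. *)
lemma slope_difference_dyadic:
  fixes \<phi> :: "real \<Rightarrow> real" and p s :: real and n :: nat
  assumes d: "\<forall>x. \<phi> differentiable at x" and p: "p > 2"
    and S: "besov_energy p \<phi> = ennreal s" and s0: "s \<ge> 0"
    and "a1 < a2" "b1 \<le> a1" "a2 \<le> b2" "b2 - b1 \<le> 2 ^ n * (a2 - a1)"
  shows "\<bar>chord_slope \<phi> a1 a2 - chord_slope \<phi> b1 b2\<bar> \<le> slope_const p * s powr (1 / p) * (b2 - b1) powr (1 - 2 / p)"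
proof -
  have comparable: "\<bar>chord_slope \<phi> a1 a2 - chord_slope \<phi> b1 b2\<bar> \<le> slope_const p * s powr (1 / p) * (b2 - b1) powr (1 - 2 / p)"
    if "a1 < a2" "b1 \<le> a1" "a2 \<le> b2" "b2 - b1 \<le> 2 * (a2 - a1)" for a1 a2 b1 b2
  proof -
    have "\<bar>chord_slope \<phi> a1 a2 - chord_slope \<phi> b1 b2\<bar> \<le> 4 * s powr (1 / p) * (b2 - b1) powr (1 - 2 / p)"
      using that by (intro slope_difference_comparable[OF d p S s0])
    also have "\<dots> \<le> slope_const p * s powr (1 / p) * (b2 - b1) powr (1 - 2 / p)"
      using slope_const_ge_4[OF p] by (intro mult_right_mono) auto
    finally show ?thesis .
  qed
  show ?thesis
    using assms(5-8)
  proof (induction n arbitrary: a1 a2 b1 b2)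
    case 0
    show ?case by (rule comparable) (use 0 in auto)
  next
    case (Suc n)
    show ?case
    proof (cases "b2 - b1 \<le> 2 * (a2 - a1)")
      case True
      then show ?thesis using comparable Suc.prems by blast
    next
      case False
      define m where "m = (b2 - b1) / 2"
      define c where "c = min a1 (b2 - m)"
      have m: "b2 - m = b1 + m" "a2 - a1 < m"
        using False by (simp_all add: m_def field_simps)
      have "c = a1 \<or> c = b2 - m" "c \<le> a1" "c \<le> b2 - m"
        by (auto simp: c_def)
      then have c: "b1 \<le> c" "c \<le> a1" "a2 \<le> c + m" "c + m \<le> b2"
        using m Suc.prems by linarith+
      have A: "\<bar>chord_slope \<phi> a1 a2 - chord_slope \<phi> c (c + m)\<bar> \<le> slope_const p * s powr (1 / p) * m powr (1 - 2 / p)"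
        using Suc.IH[of a1 a2 c "c + m"] Suc.prems c by (simp add: m_def)
      have B: "\<bar>chord_slope \<phi> c (c + m) - chord_slope \<phi> b1 b2\<bar> \<le> 4 * s powr (1 / p) * (b2 - b1) powr (1 - 2 / p)"
        by (rule slope_difference_comparable[OF d p S s0]) (use c Suc.prems in \<open>auto simp: m_def\<close>)
      have half: "m powr (1 - 2 / p) = (b2 - b1) powr (1 - 2 / p) / 2 powr (1 - 2 / p)"
        unfolding m_def by (rule powr_divide)
      have "\<bar>chord_slope \<phi> a1 a2 - chord_slope \<phi> b1 b2\<bar>
          \<le> slope_const p * s powr (1 / p) * m powr (1 - 2 / p) + 4 * s powr (1 / p) * (b2 - b1) powr (1 - 2 / p)"
        using A B by linarith
      also have "\<dots> = (slope_const p / 2 powr (1 - 2 / p) + 4) * s powr (1 / p) * (b2 - b1) powr (1 - 2 / p)"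
        unfolding half by (simp add: field_simps)
      finally show ?thesis by (simp add: slope_const_fixed_point[OF p])
    qed
  qed
qed

lemma slope_difference_nested:
  fixes \<phi> :: "real \<Rightarrow> real" and p s X1 X2 lo hi :: real
  assumes d: "\<forall>x. \<phi> differentiable at x" and p: "p > 2"
    and S: "besov_energy p \<phi> = ennreal s" and s0: "s \<ge> 0"
    and X: "X1 \<noteq> X2" "X1 \<in> {lo..hi}" "X2 \<in> {lo..hi}"
  shows "\<bar>chord_slope \<phi> X1 X2 - chord_slope \<phi> lo hi\<bar> \<le> slope_const p * s powr (1 / p) * (hi - lo) powr (1 - 2 / p)"
proof -
  define a1 where "a1 = min X1 X2"
  define a2 where "a2 = max X1 X2"
  have a: "a1 < a2" "lo \<le> a1" "a2 \<le> hi" using X by (auto simp: a1_def a2_def)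
  have "chord_slope \<phi> X1 X2 = chord_slope \<phi> a1 a2"
    unfolding a1_def a2_def by (cases "X1 \<le> X2") (auto simp: chord_slope_sym min_def max_def)
  moreover obtain n where "(hi - lo) / (a2 - a1) < 2 ^ n" using real_arch_pow[of 2] by auto
  then have "hi - lo \<le> 2 ^ n * (a2 - a1)" using a by (simp add: field_simps)
  then have "\<bar>chord_slope \<phi> a1 a2 - chord_slope \<phi> lo hi\<bar> \<le> slope_const p * s powr (1 / p) * (hi - lo) powr (1 - 2 / p)"
    by (rule slope_difference_dyadic[OF d p S s0 a])
  ultimately show ?thesis by simp
qed

lemma slope_oscillation:
  fixes \<phi> :: "real \<Rightarrow> real" and p s X1 X2 Y1 Y2 L :: real
  assumes d: "\<forall>x. \<phi> differentiable at x" and p: "p > 2"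
    and S: "besov_energy p \<phi> = ennreal s" and s0: "s \<ge> 0"
    and ne: "X1 \<noteq> X2" "Y1 \<noteq> Y2"
    and spread: "\<forall>u\<in>{X1, X2, Y1, Y2}. \<forall>v\<in>{X1, X2, Y1, Y2}. \<bar>u - v\<bar> \<le> L"
  shows "\<bar>chord_slope \<phi> X1 X2 - chord_slope \<phi> Y1 Y2\<bar> \<le> 2 * slope_const p * s powr (1 / p) * L powr (1 - 2 / p)"
proof -
  define lo where "lo = min (min X1 X2) (min Y1 Y2)"
  define hi where "hi = max (max X1 X2) (max Y1 Y2)"
  have in_range: "X1 \<in> {lo..hi}" "X2 \<in> {lo..hi}" "Y1 \<in> {lo..hi}" "Y2 \<in> {lo..hi}"
    unfolding lo_def hi_def by auto
  have "lo \<in> {X1, X2, Y1, Y2}" "hi \<in> {X1, X2, Y1, Y2}"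
    unfolding lo_def hi_def min_def max_def by auto
  then have "\<bar>hi - lo\<bar> \<le> L" using spread by blast
  then have "(hi - lo) powr (1 - 2 / p) \<le> L powr (1 - 2 / p)"
    using in_range p by (intro powr_mono2) auto
  then have "slope_const p * s powr (1 / p) * (hi - lo) powr (1 - 2 / p)
      \<le> slope_const p * s powr (1 / p) * L powr (1 - 2 / p)"
    using slope_const_ge_4[OF p] by (intro mult_left_mono) auto
  moreover have "\<bar>chord_slope \<phi> X1 X2 - chord_slope \<phi> lo hi\<bar> \<le> slope_const p * s powr (1 / p) * (hi - lo) powr (1 - 2 / p)"
    and "\<bar>chord_slope \<phi> Y1 Y2 - chord_slope \<phi> lo hi\<bar> \<le> slope_const p * s powr (1 / p) * (hi - lo) powr (1 - 2 / p)"
    using slope_difference_nested[OF d p S s0] ne in_range by blast+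
  ultimately show ?thesis by linarith
qed

lemma inner_diff_polarization:
  fixes a b c e :: "'a :: real_inner"
  shows "2 * inner (a - b) (c - e) = (norm (a - e))\<^sup>2 + (norm (b - c))\<^sup>2 - (norm (a - c))\<^sup>2 - (norm (b - e))\<^sup>2"
  by (simp add: power2_norm_eq_inner inner_diff_left inner_diff_right inner_commute algebra_simps)

lemma euclid_coords_norm_diff:
  assumes "euclid_coords T"
  shows "norm (T x - T y) = norm (x - y)"
  using assms unfolding euclid_coords_def by (metis dist_norm)

lemma euclid_coords_inner_diff:
  assumes T: "euclid_coords T"
  shows "inner (T x1 - T x2) (T y1 - T y2) = inner (x1 - x2) (y1 - y2)"
  using inner_diff_polarization[of "T x1" "T x2" "T y1" "T y2"] inner_diff_polarization[of x1 x2 y1 y2]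
  by (simp add: euclid_coords_norm_diff[OF T])

lemma norm_unitv_diff_sq:
  fixes U W :: "real \<times> real"
  assumes "U \<noteq> 0" "W \<noteq> 0"
  shows "(norm (unitv U - unitv W))\<^sup>2 = 2 - 2 * (inner U W / (norm U * norm W))"
    and "(norm (unitv U + unitv W))\<^sup>2 = 2 + 2 * (inner U W / (norm U * norm W))"
proof -
  have nU: "inner U U = (norm U)\<^sup>2" "inner W W = (norm W)\<^sup>2" by (simp_all add: power2_norm_eq_inner)
  have pU: "norm U > 0" "norm W > 0" using assms by auto
  show "(norm (unitv U - unitv W))\<^sup>2 = 2 - 2 * (inner U W / (norm U * norm W))"
    unfolding power2_norm_eq_inner unitv_def using pU
    by (simp add: inner_diff_left inner_diff_right nU inner_commute power2_eq_square field_simps)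
  show "(norm (unitv U + unitv W))\<^sup>2 = 2 + 2 * (inner U W / (norm U * norm W))"
    unfolding power2_norm_eq_inner unitv_def using pU
    by (simp add: inner_add_left inner_add_right nU inner_commute power2_eq_square field_simps)
qed

lemma euclid_coords_direction_gap:
  assumes T: "euclid_coords T" and ne: "x1 \<noteq> x2" "y1 \<noteq> y2"
  shows "norm (unitv (T x1 - T x2) - unitv (T y1 - T y2)) = norm (unitv (x1 - x2) - unitv (y1 - y2))"
    and "norm (unitv (T x1 - T x2) + unitv (T y1 - T y2)) = norm (unitv (x1 - x2) + unitv (y1 - y2))"
proof -
  have nonzero: "x1 - x2 \<noteq> 0" "y1 - y2 \<noteq> 0" "T x1 - T x2 \<noteq> 0" "T y1 - T y2 \<noteq> 0"
    using ne euclid_coords_norm_diff[OF T, of x1 x2] euclid_coords_norm_diff[OF T, of y1 y2] by auto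
  have cos: "inner (T x1 - T x2) (T y1 - T y2) / (norm (T x1 - T x2) * norm (T y1 - T y2))
      = inner (x1 - x2) (y1 - y2) / (norm (x1 - x2) * norm (y1 - y2))"
    by (simp add: euclid_coords_inner_diff[OF T] euclid_coords_norm_diff[OF T])
  show "norm (unitv (T x1 - T x2) - unitv (T y1 - T y2)) = norm (unitv (x1 - x2) - unitv (y1 - y2))"
    by (rule power2_eq_imp_eq) (use norm_unitv_diff_sq(1) nonzero cos in auto)
  show "norm (unitv (T x1 - T x2) + unitv (T y1 - T y2)) = norm (unitv (x1 - x2) + unitv (y1 - y2))"
    by (rule power2_eq_imp_eq) (use norm_unitv_diff_sq(2) nonzero cos in auto)
qed

lemma sin_sq_le_slope_diff_sq:
  fixes a b e f :: real
  assumes "a \<noteq> 0" "e \<noteq> 0"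
  shows "1 - (inner (a, b) (e, f) / (norm (a, b) * norm (e, f)))\<^sup>2 \<le> (b / a - f / e)\<^sup>2"
proof -
  define N where "N = (a\<^sup>2 + b\<^sup>2) * (e\<^sup>2 + f\<^sup>2)"
  have N: "N \<ge> a\<^sup>2 * e\<^sup>2" "a\<^sup>2 * e\<^sup>2 > 0" using assms unfolding N_def
    by (auto simp: algebra_simps intro!: add_increasing)
  have "(norm (a, b) * norm (e, f))\<^sup>2 = N"
    by (simp add: power_mult_distrib norm_Pair N_def)
  then have "1 - (inner (a, b) (e, f) / (norm (a, b) * norm (e, f)))\<^sup>2 = (N - (a * e + b * f)\<^sup>2) / N"
    using N by (simp add: power_divide diff_divide_distrib)
  also have "N - (a * e + b * f)\<^sup>2 = (a * f - b * e)\<^sup>2"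
    unfolding N_def by (simp add: power2_eq_square algebra_simps)
  also have "(a * f - b * e)\<^sup>2 / N \<le> (a * f - b * e)\<^sup>2 / (a\<^sup>2 * e\<^sup>2)"
    using N by (intro divide_left_mono) auto
  also have "\<dots> = (b / a - f / e)\<^sup>2"
    using assms by (simp add: field_simps power2_eq_square)
  finally show ?thesis .
qed

lemma direction_gap_imp_slope_gap:
  fixes a b e f c'' :: real
  assumes "a \<noteq> 0" "e \<noteq> 0" and c: "c'' > 0"
    and gap: "c'' < min (norm (unitv (a, b) - unitv (e, f))) (norm (unitv (a, b) + unitv (e, f)))"
  shows "c'' < sqrt 2 * \<bar>b / a - f / e\<bar>"
proof -
  define cos_angle where "cos_angle = inner (a, b) (e, f) / (norm (a, b) * norm (e, f))"
  have nonzero: "(a, b) \<noteq> 0" "(e, f) \<noteq> 0" using assms by (auto simp: zero_prod_def)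
  have "c''\<^sup>2 < (norm (unitv (a, b) - unitv (e, f)))\<^sup>2"
    and "c''\<^sup>2 < (norm (unitv (a, b) + unitv (e, f)))\<^sup>2"
    using gap c by (auto intro!: power_strict_mono)
  then have "c''\<^sup>2 < 2 - 2 * cos_angle" "c''\<^sup>2 < 2 + 2 * cos_angle"
    using norm_unitv_diff_sq[OF nonzero] unfolding cos_angle_def by linarith+
  then have below: "c''\<^sup>2 < 2 - 2 * \<bar>cos_angle\<bar>"
    by (cases "cos_angle \<ge> 0") auto
  moreover have "0 < c''\<^sup>2" using c by simp
  ultimately have "\<bar>cos_angle\<bar> < 1" by linarith
  have "cos_angle\<^sup>2 = \<bar>cos_angle\<bar> * \<bar>cos_angle\<bar>" by (simp add: power2_eq_square abs_mult_self_eq)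
  also have "\<dots> \<le> \<bar>cos_angle\<bar>" using \<open>\<bar>cos_angle\<bar> < 1\<close> by (intro mult_left_le) auto
  finally have "cos_angle\<^sup>2 \<le> \<bar>cos_angle\<bar>" .
  moreover have "1 - cos_angle\<^sup>2 \<le> (b / a - f / e)\<^sup>2"
    unfolding cos_angle_def using assms(1,2) by (rule sin_sq_le_slope_diff_sq)
  moreover have "(sqrt 2 * \<bar>b / a - f / e\<bar>)\<^sup>2 = 2 * (b / a - f / e)\<^sup>2"
    by (simp add: power_mult_distrib)
  ultimately have "c''\<^sup>2 < (sqrt 2 * \<bar>b / a - f / e\<bar>)\<^sup>2"
    using below by linarith
  then show ?thesis
    by (rule power_less_imp_less_base) simp
qed

lemma square_dist_le:
  assumes "z \<in> square a \<delta>" "z' \<in> square a \<delta>"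
  shows "dist z z' \<le> sqrt 2 * \<delta>"
proof -
  obtain z1 z2 z1' z2' where zz: "z = (z1, z2)" "z' = (z1', z2')" by (cases z, cases z')
  have b: "\<bar>z1 - z1'\<bar> \<le> \<delta>" "\<bar>z2 - z2'\<bar> \<le> \<delta>" using assms zz by (auto simp: square_def)
  then have \<delta>: "\<delta> \<ge> 0" by linarith
  have "dist z z' = sqrt ((z1 - z1')\<^sup>2 + (z2 - z2')\<^sup>2)"
    using zz by (simp add: dist_Pair_Pair dist_real_def)
  also have "\<dots> \<le> sqrt (\<delta>\<^sup>2 + \<delta>\<^sup>2)"
    using b \<delta> by (intro real_sqrt_le_mono add_mono) (auto intro: power2_le_iff_abs_le[THEN iffD2])
  also have "\<dots> = sqrt 2 * \<delta>" using \<delta> by (simp add: real_sqrt_mult)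
  finally show ?thesis .
qed

lemma euclid_coords_fst_spread:
  assumes T: "euclid_coords T" and "z \<in> square a \<delta>" "z' \<in> square a \<delta>"
  shows "\<bar>fst (T z) - fst (T z')\<bar> \<le> sqrt 2 * \<delta>"
proof -
  have "\<bar>fst (T z) - fst (T z')\<bar> = \<bar>fst (T z - T z')\<bar>" by simp
  also have "\<dots> \<le> norm (T z - T z')"
    using norm_fst_le[of "fst (T z - T z')" "snd (T z - T z')"] by (simp del: fst_diff snd_diff)
  also have "\<dots> = dist z z'" by (simp add: euclid_coords_norm_diff[OF T] dist_norm)
  also have "\<dots> \<le> sqrt 2 * \<delta>" using assms(2,3) by (rule square_dist_le)
  finally show ?thesis .
qed

lemma graph_chord:
  assumes T: "euclid_coords T" and G: "\<forall>z\<in>\<Omega>. snd (T z) = \<phi> (fst (T z))"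
    and z: "z \<in> \<Omega>" "z' \<in> \<Omega>" "z \<noteq> z'"
  shows "fst (T z) \<noteq> fst (T z')"
    and "T z - T z' = (fst (T z) - fst (T z'), \<phi> (fst (T z)) - \<phi> (fst (T z')))"
proof -
  have graph: "T w = (fst (T w), \<phi> (fst (T w)))" if "w \<in> \<Omega>" for w
    using G that by (metis prod.collapse)
  show "T z - T z' = (fst (T z) - fst (T z'), \<phi> (fst (T z)) - \<phi> (fst (T z')))"
    using graph[OF z(1)] graph[OF z(2)] by (metis diff_Pair)
  show "fst (T z) \<noteq> fst (T z')"
  proof
    assume "fst (T z) = fst (T z')"
    then have "T z = T z'" using graph z by metis
    then show False using euclid_coords_norm_diff[OF T, of z z'] z by simp
  qed
qed

definition graph_const :: "real \<Rightarrow> real \<Rightarrow> real" where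
  "graph_const p c'' = c'' / (2 * sqrt 2 * slope_const p * sqrt 2 powr (1 - 2 / p))"

lemma graph_const_pos: "p > 2 \<Longrightarrow> c'' > 0 \<Longrightarrow> graph_const p c'' > 0"
  using slope_const_ge_4[of p] by (simp add: graph_const_def)

lemma besov_fun_ge_graph_const:
  fixes p c'' \<delta> :: real and \<phi> :: "real \<Rightarrow> real"
  assumes p: "p > 2" and c: "c'' > 0" and \<delta>: "\<delta> > 0"
    and d: "\<forall>x. \<phi> differentiable at x" and T: "euclid_coords T"
    and G: "\<forall>z\<in>\<Omega>. snd (T z) = \<phi> (fst (T z))" and sq: "\<Omega> \<subseteq> square a \<delta>"
    and pts: "x1 \<in> \<Omega>" "x2 \<in> \<Omega>" "y1 \<in> \<Omega>" "y2 \<in> \<Omega>" and ne: "x1 \<noteq> x2" "y1 \<noteq> y2"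
    and gap: "c'' < min (norm (unitv (x1 - x2) - unitv (y1 - y2))) (norm (unitv (x1 - x2) + unitv (y1 - y2)))"
  shows "ennreal (graph_const p c'' * \<delta> powr (2 / p - 1)) \<le> besov_fun p \<phi>"
proof (cases "besov_energy p \<phi> = \<infinity>")
  case True
  then show ?thesis by (simp add: besov_fun_infinite)
next
  case False
  then obtain s where S: "besov_energy p \<phi> = ennreal s" and s0: "s \<ge> 0"
    using ennreal_cases[of "besov_energy p \<phi>"] by auto
  define q where "q = s powr (1 / p)"
  define K where "K = slope_const p"
  define M where "M = 2 * sqrt 2 * K * sqrt 2 powr (1 - 2 / p)"
  have M: "M > 0" using slope_const_ge_4[OF p] by (simp add: M_def K_def)
  define X1 X2 Y1 Y2 where "X1 = fst (T x1)" and "X2 = fst (T x2)" and "Y1 = fst (T y1)" and "Y2 = fst (T y2)"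
  note chord_x = graph_chord[OF T G pts(1,2) ne(1), folded X1_def X2_def]
  note chord_y = graph_chord[OF T G pts(3,4) ne(2), folded Y1_def Y2_def]
  have "X1 - X2 \<noteq> 0" "Y1 - Y2 \<noteq> 0" using chord_x(1) chord_y(1) by auto
  \<comment> \<open>The two chords are transversal, so their slopes differ by a definite amount \<dots>\<close>
  moreover have "c'' < min (norm (unitv (T x1 - T x2) - unitv (T y1 - T y2)))
                           (norm (unitv (T x1 - T x2) + unitv (T y1 - T y2)))"
    using gap euclid_coords_direction_gap[OF T ne] by simp
  ultimately have slope_gap: "c'' < sqrt 2 * \<bar>chord_slope \<phi> X2 X1 - chord_slope \<phi> Y2 Y1\<bar>"
    unfolding chord_x(2) chord_y(2) chord_slope_def by (rule direction_gap_imp_slope_gap[OF _ _ c])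
  \<comment> \<open>\<dots> while the energy bounds the oscillation of slopes over the projection of the square.\<close>
  have "\<forall>z\<in>\<Omega>. \<forall>z'\<in>\<Omega>. \<bar>fst (T z) - fst (T z')\<bar> \<le> sqrt 2 * \<delta>"
    using sq euclid_coords_fst_spread[OF T] by blast
  then have "\<bar>chord_slope \<phi> X2 X1 - chord_slope \<phi> Y2 Y1\<bar> \<le> 2 * K * q * (sqrt 2 * \<delta>) powr (1 - 2 / p)"
    unfolding K_def q_def using chord_x(1) chord_y(1) pts \<delta>
    by (intro slope_oscillation[OF d p S s0]) (auto simp: X1_def X2_def Y1_def Y2_def)
  then have "sqrt 2 * \<bar>chord_slope \<phi> X2 X1 - chord_slope \<phi> Y2 Y1\<bar> \<le> sqrt 2 * (2 * K * q * (sqrt 2 * \<delta>) powr (1 - 2 / p))"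
    by (intro mult_left_mono) auto
  also have "\<dots> = M * (q * \<delta> powr (1 - 2 / p))"
    using \<delta> by (simp add: M_def powr_mult mult_ac)
  finally have "c'' / M \<le> q * \<delta> powr (1 - 2 / p)"
    using slope_gap M by (simp add: pos_divide_le_eq mult.commute)
  moreover have "graph_const p c'' = c'' / M"
    by (simp add: graph_const_def M_def K_def)
  ultimately have "graph_const p c'' * \<delta> powr (2 / p - 1) \<le> q * \<delta> powr (1 - 2 / p) * \<delta> powr (2 / p - 1)"
    using mult_right_mono[of "c'' / M" "q * \<delta> powr (1 - 2 / p)" "\<delta> powr (2 / p - 1)"] by simp
  also have "\<dots> = q"
    using \<delta> by (simp add: mult.assoc powr_add[symmetric])
  finally show ?thesis
    using besov_fun_finite[OF S s0] by (simp add: q_def ennreal_leI)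
qed

lemma rough_besov_lower_bound:
  fixes p c c' c'' \<delta> :: real
  assumes p: "p > 2" and c'': "c'' > 0" and \<delta>: "\<delta> > 0"
    and R: "rough p c c' c'' E0 a \<delta>"
  shows "ennreal (min c (graph_const p c'') * \<delta> powr (2 / p - 1)) \<le> besov_set p (square a \<delta> \<inter> E0)"
proof -
  have \<Omega>: "E0 \<inter> square a \<delta> = square a \<delta> \<inter> E0" by blast
  have mono: "ennreal (min c (graph_const p c'') * \<delta> powr (2 / p - 1)) \<le> ennreal (k * \<delta> powr (2 / p - 1))"
    if "k \<in> {c, graph_const p c''}" for k
    using that by (intro ennreal_leI mult_right_mono) auto
  from R[unfolded rough_def \<Omega>] show ?thesis
  proof (elim disjE exE conjE)
    assume "ennreal (c * \<delta> powr (2 / p - 1)) \<le> besov_set p (square a \<delta> \<inter> E0)"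
    then show ?thesis using mono[of c] by simp
  next
    fix x1 x2 y1 y2
    assume pts: "x1 \<in> square a \<delta> \<inter> E0" "x2 \<in> square a \<delta> \<inter> E0"
        "y1 \<in> square a \<delta> \<inter> E0" "y2 \<in> square a \<delta> \<inter> E0"
      and ne: "x1 \<noteq> x2" "y1 \<noteq> y2"
      and gap: "c'' < min (norm (unitv (x1 - x2) - unitv (y1 - y2))) (norm (unitv (x1 - x2) + unitv (y1 - y2)))"
    show ?thesis unfolding besov_set_def
    proof (rule INF_greatest)
      fix \<phi> assume "\<phi> \<in> {\<phi>. (\<forall>x. \<phi> differentiable at x) \<and>
          (\<exists>T. euclid_coords T \<and> (\<forall>z\<in>square a \<delta> \<inter> E0. snd (T z) = \<phi> (fst (T z))))}"
      then obtain T where d: "\<forall>x. \<phi> differentiable at x" and T: "euclid_coords T"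
        and G: "\<forall>z\<in>square a \<delta> \<inter> E0. snd (T z) = \<phi> (fst (T z))" by blast
      have "ennreal (graph_const p c'' * \<delta> powr (2 / p - 1)) \<le> besov_fun p \<phi>"
        by (rule besov_fun_ge_graph_const[OF p c'' \<delta> d T G _ pts ne gap]) auto
      then show "ennreal (min c (graph_const p c'') * \<delta> powr (2 / p - 1)) \<le> besov_fun p \<phi>"
        using mono[of "graph_const p c''"] by simp
    qed
  qed
qed

theorem mainTheorem8:
  fixes p c c'' :: real
  assumes "2 < p" and "c > 0" and "c'' > 0"
  shows "\<exists>C>0. \<forall>c' > 0. \<forall>(E0 :: (real \<times> real) set) a \<delta>.
           finite E0 \<longrightarrow> \<delta> > 0 \<longrightarrow> rough p c c' c'' E0 a \<delta> \<longrightarrow>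
           besov_set p (square a \<delta> \<inter> E0) \<ge> ennreal (inverse C * \<delta> powr (2 / p - 1))"
proof -
  define k where "k = min c (graph_const p c'')"
  have "k > 0" using assms graph_const_pos by (simp add: k_def)
  then show ?thesis
    using rough_besov_lower_bound[OF assms(1,3)] by (intro exI[of _ "inverse k"]) (auto simp: k_def)
qed

end
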